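(* Let $\mathcal{A}$ be a finite abelian group with $|\mathcal{A}|\ge 3$. Let $H_1(p_1,p_2)$ denote a graph consisting of a triangle $v_2v_3v_4$, a vertex $v_1$ adjacent to $v_2$, $p_1\ge0$ pendant vertices adjacent to $v_1$, $p_2\ge 0$ pendant vertices adjacent to $v_2$, and $t\ge 1$ further neighbours of $v_1$, each of which is a support vertex all of whose neighbours other than $v_1$ are pendant vertices. Consider the case $p_1=0$. Then $H_1(0,p_2)$ is $\mathcal{A}$-vertex magic if and only if $p_2=0$ and the following holds: if $v_1$ has a weak support neighbour, there exists $g\in\mathcal{A}\setminus\{0\}$ with $d(v_1)\not\equiv 1$, $d(v_1)\not\equiv 2$, $2d(v_1)\not\equiv 2$ and $2d(v_1)\not\equiv 3 \pmod{o(g)}$; and if every support neighbour of $v_1$ is a strong support vertex, there exists $g\in\mathcal{A}\setminus\{0\}$ with $d(v_1)\not\equiv 1$, $d(v_1)\not\equiv 2$ and $2d(v_1)\not\equiv 3\pmod{o(g)}$.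
   Context: A pendant vertex has degree $1$; a support vertex is a vertex adjacent to a pendant vertex; it is a weak support vertex if it is adjacent to exactly one pendant vertex and a strong support vertex if adjacent to at least two. $d(v)$ is the degree of $v$ and $o(g)$ the order of $g$. A map $\ell:V(G)\to\mathcal{A}\setminus\{0\}$ is an $\mathcal{A}$-vertex magic labeling if there is $\mu\in\mathcal{A}$ with $\sum_{u\in N(v)}\ell(u)=\mu$ for every vertex $v$; $G$ is $\mathcal{A}$-vertex magic if such a labeling exists. *)

theory Defs
  imports "HOL-Algebra.Multiplicative_Group" "HOL-Number_Theory.Cong"
begin

definition nbhd :: "'v set \<Rightarrow> ('v \<Rightarrow> 'v \<Rightarrow> bool) \<Rightarrow> 'v \<Rightarrow> 'v set" where
  "nbhd V E v = {u \<in> V. E v u}"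

definition deg :: "'v set \<Rightarrow> ('v \<Rightarrow> 'v \<Rightarrow> bool) \<Rightarrow> 'v \<Rightarrow> nat" where
  "deg V E v = card (nbhd V E v)"

definition pendant :: "'v set \<Rightarrow> ('v \<Rightarrow> 'v \<Rightarrow> bool) \<Rightarrow> 'v \<Rightarrow> bool" where
  "pendant V E v \<longleftrightarrow> v \<in> V \<and> deg V E v = 1"

definition support :: "'v set \<Rightarrow> ('v \<Rightarrow> 'v \<Rightarrow> bool) \<Rightarrow> 'v \<Rightarrow> bool" where
  "support V E v \<longleftrightarrow> v \<in> V \<and> (\<exists>u \<in> nbhd V E v. pendant V E u)"

definition weak_support :: "'v set \<Rightarrow> ('v \<Rightarrow> 'v \<Rightarrow> bool) \<Rightarrow> 'v \<Rightarrow> bool" where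
  "weak_support V E v \<longleftrightarrow> v \<in> V \<and> card {u \<in> nbhd V E v. pendant V E u} = 1"

definition strong_support :: "'v set \<Rightarrow> ('v \<Rightarrow> 'v \<Rightarrow> bool) \<Rightarrow> 'v \<Rightarrow> bool" where
  "strong_support V E v \<longleftrightarrow> v \<in> V \<and> card {u \<in> nbhd V E v. pendant V E u} \<ge> 2"

text \<open>A-vertex magic labelling, for an abelian group G (written multiplicatively in
  HOL-Algebra: the identity \<one> plays the role of 0 and the group product that of the sum).\<close>

definition vertex_magic_labeling ::
  "('a, 'b) monoid_scheme \<Rightarrow> 'v set \<Rightarrow> ('v \<Rightarrow> 'v \<Rightarrow> bool) \<Rightarrow> ('v \<Rightarrow> 'a) \<Rightarrow> bool" where
  "vertex_magic_labeling G V E l \<longleftrightarrow>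
     (\<forall>v \<in> V. l v \<in> carrier G - {\<one>\<^bsub>G\<^esub>}) \<and>
     (\<exists>\<mu> \<in> carrier G. \<forall>v \<in> V. finprod G l (nbhd V E v) = \<mu>)"

definition vertex_magic ::
  "('a, 'b) monoid_scheme \<Rightarrow> 'v set \<Rightarrow> ('v \<Rightarrow> 'v \<Rightarrow> bool) \<Rightarrow> bool" where
  "vertex_magic G V E \<longleftrightarrow> (\<exists>l. vertex_magic_labeling G V E l)"

text \<open>The graph H_1(p1,p2): triangle V2 V3 V4, V1 adjacent to V2, p1 pendants P1 j at V1,
  p2 pendants P2 j at V2, and t further neighbours S i of V1, where S i carries
  q i \<ge> 1 pendant vertices L i j (and no other neighbours).\<close>

datatype hvert = V1 | V2 | V3 | V4 | P1 nat | P2 nat | S nat | L nat nat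

definition H1_verts :: "nat \<Rightarrow> nat \<Rightarrow> nat \<Rightarrow> (nat \<Rightarrow> nat) \<Rightarrow> hvert set" where
  "H1_verts p1 p2 t q = {V1, V2, V3, V4} \<union> {P1 j | j. j < p1} \<union> {P2 j | j. j < p2}
     \<union> {S i | i. i < t} \<union> {L i j | i j. i < t \<and> j < q i}"

definition H1_base :: "nat \<Rightarrow> nat \<Rightarrow> nat \<Rightarrow> (nat \<Rightarrow> nat) \<Rightarrow> hvert \<Rightarrow> hvert \<Rightarrow> bool" where
  "H1_base p1 p2 t q x y \<longleftrightarrow>
     (x = V2 \<and> y = V3) \<or> (x = V3 \<and> y = V4) \<or> (x = V2 \<and> y = V4) \<or> (x = V1 \<and> y = V2) \<or>
     (\<exists>j < p1. x = V1 \<and> y = P1 j) \<or> (\<exists>j < p2. x = V2 \<and> y = P2 j) \<or>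
     (\<exists>i < t. x = V1 \<and> y = S i) \<or> (\<exists>i < t. \<exists>j < q i. x = S i \<and> y = L i j)"

definition H1_adj :: "nat \<Rightarrow> nat \<Rightarrow> nat \<Rightarrow> (nat \<Rightarrow> nat) \<Rightarrow> hvert \<Rightarrow> hvert \<Rightarrow> bool" where
  "H1_adj p1 p2 t q x y \<longleftrightarrow> H1_base p1 p2 t q x y \<or> H1_base p1 p2 t q y x"

end

theory Submission
  imports Defs
begin

text \<open>Write the group multiplicatively and let \<mu> be the magic constant. A pendant vertex
  forces the label of its support vertex to be \<mu>, so every S i is labelled \<mu>. Solving the
  vertex equations of V1, V3, V4, V2 and S i in turn then forces the labels \<mu>^(1 - t) on V2,
  \<mu>^t on V3 and V4, \<mu>^(1 - 2t) on V1, and the product \<mu>^(2t) for the pendants of each S i.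
  A pendant at V2 would force V2 to carry \<mu> and hence V4 the identity.
  Conversely these labels form a magic labelling as soon as they avoid the identity: since the
  group has at least three elements, every element is a product of k \<ge> 2 non-identity
  elements, so only a weak support vertex S i needs \<mu>^(2t) \<noteq> 1. With d = t + 1 the four
  exponents are d - 1, 2 - d, 3 - 2d and 2d - 2, which gives the congruences modulo the
  order of \<mu>.\<close>

abbreviation "H1V p2 t q \<equiv> H1_verts 0 p2 t q"
abbreviation "H1E p2 t q \<equiv> H1_adj 0 p2 t q"
abbreviation "H1N p2 t q \<equiv> nbhd (H1V p2 t q) (H1E p2 t q)"

lemma H1_nbhd_V1: "H1N p2 t q V1 = insert V2 (S ` {..<t})"
  and H1_nbhd_V2: "H1N p2 t q V2 = {V1, V3, V4} \<union> P2 ` {..<p2}"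
  and H1_nbhd_V3: "H1N p2 t q V3 = {V2, V4}"
  and H1_nbhd_V4: "H1N p2 t q V4 = {V2, V3}"
  and H1_nbhd_P2: "j < p2 \<Longrightarrow> H1N p2 t q (P2 j) = {V2}"
  and H1_nbhd_S: "i < t \<Longrightarrow> H1N p2 t q (S i) = insert V1 (L i ` {..<q i})"
  and H1_nbhd_L: "i < t \<Longrightarrow> j < q i \<Longrightarrow> H1N p2 t q (L i j) = {S i}"
  by (auto simp: nbhd_def H1_verts_def H1_adj_def H1_base_def)

lemma H1_verts_cases:
  assumes "v \<in> H1V p2 t q"
  obtains "v = V1" | "v = V2" | "v = V3" | "v = V4" | j where "j < p2" "v = P2 j"
    | i where "i < t" "v = S i" | i j where "i < t" "j < q i" "v = L i j"
  using assms by (auto simp: H1_verts_def)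

lemma H1_verts_memI [simp]:
  "V1 \<in> H1V p2 t q" "V2 \<in> H1V p2 t q" "V3 \<in> H1V p2 t q" "V4 \<in> H1V p2 t q"
  "j < p2 \<Longrightarrow> P2 j \<in> H1V p2 t q" "i < t \<Longrightarrow> S i \<in> H1V p2 t q"
  "i < t \<Longrightarrow> j < q i \<Longrightarrow> L i j \<in> H1V p2 t q"
  by (auto simp: H1_verts_def)

lemma hvert_notin_images [simp]: "V2 \<notin> S ` A" "V1 \<notin> L i ` A"
  by auto

lemma card_L_image [simp]: "card (L i ` A) = card A"
  by (simp add: card_image inj_on_def)

lemma card_S_image [simp]: "card (S ` A) = card A"
  by (simp add: card_image inj_on_def)

lemma H1_deg_V1: "deg (H1V p2 t q) (H1E p2 t q) V1 = Suc t"
  by (simp add: deg_def H1_nbhd_V1)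

lemma H1_not_pendant_V1: "1 \<le> t \<Longrightarrow> \<not> pendant (H1V p2 t q) (H1E p2 t q) V1"
  by (simp add: pendant_def H1_deg_V1)

lemma H1_pendant_nbrs_S:
  assumes "1 \<le> t" "i < t"
  shows "{u \<in> H1N p2 t q (S i). pendant (H1V p2 t q) (H1E p2 t q) u} = L i ` {..<q i}"
  using assms H1_not_pendant_V1[OF assms(1)]
  by (auto simp: H1_nbhd_S H1_nbhd_L pendant_def deg_def)

lemma H1_no_pendant_nbrs_V2:
  assumes "1 \<le> t"
  shows "{u \<in> H1N 0 t q V2. pendant (H1V 0 t q) (H1E 0 t q) u} = {}"
  using H1_not_pendant_V1[OF assms]
  by (auto simp: H1_nbhd_V2 H1_nbhd_V3 H1_nbhd_V4 pendant_def deg_def)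

lemma H1_weak_support_nbr_V1_iff:
  assumes "1 \<le> t"
  shows "(\<exists>u \<in> H1N 0 t q V1. weak_support (H1V 0 t q) (H1E 0 t q) u) \<longleftrightarrow>
    (\<exists>i<t. q i = 1)"
  using assms
  by (auto simp: H1_nbhd_V1 weak_support_def H1_pendant_nbrs_S H1_no_pendant_nbrs_V2)

lemma H1_support_nbrs_V1_strong_iff:
  assumes "1 \<le> t" and "\<forall>i<t. 1 \<le> q i"
  shows "(\<forall>u \<in> H1N 0 t q V1. support (H1V 0 t q) (H1E 0 t q) u \<longrightarrow>
      strong_support (H1V 0 t q) (H1E 0 t q) u) \<longleftrightarrow> (\<forall>i<t. q i \<noteq> 1)"
proof -
  have "support (H1V 0 t q) (H1E 0 t q) (S i)" if "i < t" for i
  proof -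
    have "L i 0 \<in> {u \<in> H1N 0 t q (S i). pendant (H1V 0 t q) (H1E 0 t q) u}"
      unfolding H1_pendant_nbrs_S[OF assms(1) that] using assms(2) that by force
    then show ?thesis using that by (auto simp: support_def)
  qed
  moreover have "\<not> support (H1V 0 t q) (H1E 0 t q) V2"
    using H1_no_pendant_nbrs_V2[OF assms(1)] unfolding support_def by blast
  ultimately show ?thesis
    using assms by (force simp: H1_nbhd_V1 strong_support_def H1_pendant_nbrs_S)
qed

lemma (in group) int_pow_eq_one_iff_cong:
  assumes "x \<in> carrier G"
  shows "x [^] (int a - int b) = \<one> \<longleftrightarrow> [a = b] (mod ord x)"
proof -
  have "[a = b] (mod ord x) \<longleftrightarrow> [int a = int b] (mod int (ord x))"
    by (rule cong_int_iff [symmetric])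
  then show ?thesis
    by (simp add: int_pow_eq_id[OF assms] cong_iff_dvd_diff)
qed

lemma (in comm_monoid) finprod_eq_pow_card:
  assumes "x \<in> carrier G" and "\<And>a. a \<in> A \<Longrightarrow> f a = x"
  shows "finprod G f A = x [^] card A"
proof -
  have "finprod G f A = finprod G (\<lambda>_. x) A"
    using assms by (intro finprod_cong') auto
  then show ?thesis
    using assms(1) by (simp add: finprod_const)
qed

lemma (in group) mult_int_pow_eq_self_iff:
  assumes "\<mu> \<in> carrier G" and "a \<in> carrier G"
  shows "a \<otimes> \<mu> [^] (k::int) = \<mu> \<longleftrightarrow> a = \<mu> [^] (1 - k)"
proof -
  have "\<mu> [^] (1 - k) \<otimes> \<mu> [^] k = \<mu>"
    using assms(1) by (simp flip: int_pow_mult)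
  then show ?thesis
    using assms by (metis int_pow_closed right_cancel)
qed

context comm_group
begin

lemma int_pow_mult_eq_self_iff:
  assumes "\<mu> \<in> carrier G" and "a \<in> carrier G"
  shows "\<mu> [^] (k::int) \<otimes> a = \<mu> \<longleftrightarrow> a = \<mu> [^] (1 - k)"
  using mult_int_pow_eq_self_iff[OF assms] assms by (simp add: m_comm)

lemma finprod_nonidentity_labelling_iff:
  assumes "3 \<le> card (carrier G)" and "finite A" and "A \<noteq> {}" and "x \<in> carrier G"
  shows "(\<exists>f \<in> A \<rightarrow> carrier G - {\<one>}. finprod G f A = x) \<longleftrightarrow> 2 \<le> card A \<or> x \<noteq> \<one>"
proof
  assume "\<exists>f \<in> A \<rightarrow> carrier G - {\<one>}. finprod G f A = x"
  then obtain f where f: "f \<in> A \<rightarrow> carrier G - {\<one>}" and x: "finprod G f A = x" by blast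
  show "2 \<le> card A \<or> x \<noteq> \<one>"
  proof (cases "2 \<le> card A")
    case False
    moreover have "0 < card A" using assms(2,3) by (simp add: card_gt_0_iff)
    ultimately have "card A = 1" by linarith
    then obtain a where "A = {a}" by (rule card_1_singletonE)
    then show ?thesis using f x by auto
  qed simp
next
  have "carrier G - {\<one>, y} \<noteq> {}" for y
  proof
    assume "carrier G - {\<one>, y} = {}"
    then have "card (carrier G) \<le> card {\<one>, y}" by (simp add: card_mono)
    also have "\<dots> \<le> 2" by (simp add: card_insert_le_m1)
    finally show False using assms(1) by simp
  qed
  then have avoid: "\<exists>z \<in> carrier G. z \<noteq> \<one> \<and> z \<noteq> y" for y by blast
  show "2 \<le> card A \<or> x \<noteq> \<one> \<Longrightarrow> \<exists>f \<in> A \<rightarrow> carrier G - {\<one>}. finprod G f A = x"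
    using assms(2-4)
  proof (induction A arbitrary: x rule: finite_induct)
    case empty
    then show ?case by simp
  next
    case (insert a B)
    show ?case
    proof (cases "B = {}")
      case True
      then show ?thesis using insert.prems by (intro bexI[of _ "\<lambda>_. x"]) auto
    next
      case False
      obtain y where y: "y \<in> carrier G" "y \<noteq> \<one>" "y \<noteq> x" using avoid by blast
      have x': "inv y \<otimes> x \<in> carrier G" "inv y \<otimes> x \<noteq> \<one>"
        using y insert.prems inv_solve_left[of "\<one>" y x] by auto
      then obtain f where f: "f \<in> B \<rightarrow> carrier G - {\<one>}" "finprod G f B = inv y \<otimes> x"
        using insert.IH insert.hyps(1) False by blast
      have "finprod G (f(a := y)) B = finprod G f B"
        by (rule finprod_cong') (use f(1) insert.hyps(2) in auto)
      then have "finprod G (f(a := y)) (insert a B) = y \<otimes> (inv y \<otimes> x)"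
        using f y(1) insert.hyps by (subst finprod_insert) auto
      then have "finprod G (f(a := y)) (insert a B) = x"
        using y(1) insert.prems by (simp add: m_assoc [symmetric])
      moreover have "f(a := y) \<in> insert a B \<rightarrow> carrier G - {\<one>}"
        using f(1) y by (auto simp: Pi_iff)
      ultimately show ?thesis by blast
    qed
  qed
qed

end

definition H1_forced_labels ::
  "('a, 'b) monoid_scheme \<Rightarrow> nat \<Rightarrow> (nat \<Rightarrow> nat) \<Rightarrow> 'a \<Rightarrow> (hvert \<Rightarrow> 'a) \<Rightarrow> bool" where
  "H1_forced_labels G t q \<mu> l \<longleftrightarrow>
     l V1 = \<mu> [^]\<^bsub>G\<^esub> (1 - 2 * int t) \<and> l V2 = \<mu> [^]\<^bsub>G\<^esub> (1 - int t) \<and>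
     l V3 = \<mu> [^]\<^bsub>G\<^esub> int t \<and> l V4 = \<mu> [^]\<^bsub>G\<^esub> int t \<and>
     (\<forall>i<t. l (S i) = \<mu> \<and> finprod G l (L i ` {..<q i}) = \<mu> [^]\<^bsub>G\<^esub> (2 * int t))"

definition H1_feasible_constant ::
  "('a, 'b) monoid_scheme \<Rightarrow> nat \<Rightarrow> (nat \<Rightarrow> nat) \<Rightarrow> 'a \<Rightarrow> bool" where
  "H1_feasible_constant G t q \<mu> \<longleftrightarrow> \<mu> \<in> carrier G - {\<one>\<^bsub>G\<^esub>} \<and>
     \<mu> [^]\<^bsub>G\<^esub> int t \<noteq> \<one>\<^bsub>G\<^esub> \<and> \<mu> [^]\<^bsub>G\<^esub> (1 - int t) \<noteq> \<one>\<^bsub>G\<^esub> \<and>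
     \<mu> [^]\<^bsub>G\<^esub> (1 - 2 * int t) \<noteq> \<one>\<^bsub>G\<^esub> \<and>
     (\<forall>i<t. q i = 1 \<longrightarrow> \<mu> [^]\<^bsub>G\<^esub> (2 * int t) \<noteq> \<one>\<^bsub>G\<^esub>)"

context comm_group
begin

lemma H1_finprod_S:
  assumes "\<mu> \<in> carrier G" and "\<And>i. i < t \<Longrightarrow> l (S i) = \<mu>"
  shows "finprod G l (S ` {..<t}) = \<mu> [^] int t"
  using assms by (subst finprod_eq_pow_card) (auto simp: int_pow_int)

lemma H1_forced_labels_if_magic_equations:
  assumes q: "\<forall>i<t. 1 \<le> q i" and \<mu>: "\<mu> \<in> carrier G"
    and l: "\<And>v. v \<in> H1V 0 t q \<Longrightarrow> l v \<in> carrier G"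
    and magic: "\<And>v. v \<in> H1V 0 t q \<Longrightarrow> finprod G l (H1N 0 t q v) = \<mu>"
  shows "H1_forced_labels G t q \<mu> l"
proof -
  have lS: "l (S i) = \<mu>" if "i < t" for i
  proof -
    have "0 < q i" using q that by auto
    then show ?thesis using magic[of "L i 0"] l that by (simp add: H1_nbhd_L)
  qed
  have "l V2 \<otimes> \<mu> [^] int t = \<mu>"
    using magic[of V1] l H1_finprod_S[of \<mu> t l, OF \<mu> lS] by (simp add: H1_nbhd_V1 Pi_iff)
  then have lV2: "l V2 = \<mu> [^] (1 - int t)"
    using \<mu> l by (simp add: mult_int_pow_eq_self_iff)
  have "\<mu> [^] (1 - int t) \<otimes> l V3 = \<mu>"
    using magic[of V4] l lV2 \<mu> by (simp add: H1_nbhd_V4 Pi_iff)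
  then have lV3: "l V3 = \<mu> [^] int t"
    using \<mu> l by (simp add: int_pow_mult_eq_self_iff)
  have "\<mu> [^] (1 - int t) \<otimes> l V4 = \<mu>"
    using magic[of V3] l lV2 \<mu> by (simp add: H1_nbhd_V3 Pi_iff)
  then have lV4: "l V4 = \<mu> [^] int t"
    using \<mu> l by (simp add: int_pow_mult_eq_self_iff)
  have "l V1 \<otimes> \<mu> [^] (2 * int t) = \<mu>"
    using magic[of V2] l lV3 lV4 \<mu> by (simp add: H1_nbhd_V2 Pi_iff flip: int_pow_mult)
  then have lV1: "l V1 = \<mu> [^] (1 - 2 * int t)"
    using \<mu> l by (simp add: mult_int_pow_eq_self_iff)
  have "finprod G l (L i ` {..<q i}) = \<mu> [^] (2 * int t)" if "i < t" for i
  proof -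
    have "\<mu> [^] (1 - 2 * int t) \<otimes> finprod G l (L i ` {..<q i}) = \<mu>"
      using magic[of "S i"] l lV1 \<mu> that by (simp add: H1_nbhd_S Pi_iff)
    moreover have "finprod G l (L i ` {..<q i}) \<in> carrier G"
      using l that by (auto intro: finprod_closed)
    ultimately show ?thesis
      using \<mu> by (simp add: int_pow_mult_eq_self_iff)
  qed
  then show ?thesis
    using lS lV1 lV2 lV3 lV4 by (simp add: H1_forced_labels_def)
qed

lemma H1_magic_equations_if_forced_labels:
  assumes \<mu>: "\<mu> \<in> carrier G" and l: "\<And>v. v \<in> H1V 0 t q \<Longrightarrow> l v \<in> carrier G"
    and forced: "H1_forced_labels G t q \<mu> l" and v: "v \<in> H1V 0 t q"
  shows "finprod G l (H1N 0 t q v) = \<mu>"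
  using v
proof (cases rule: H1_verts_cases)
  case 1
  have "finprod G l (S ` {..<t}) = \<mu> [^] int t"
    using \<mu> forced by (intro H1_finprod_S) (auto simp: H1_forced_labels_def)
  then show ?thesis
    using 1 l forced \<mu> by (simp add: H1_nbhd_V1 Pi_iff H1_forced_labels_def mult_int_pow_eq_self_iff)
next
  case 2
  then show ?thesis
    using l forced \<mu> by (simp add: H1_nbhd_V2 Pi_iff H1_forced_labels_def mult_int_pow_eq_self_iff
        flip: int_pow_mult)
next
  case 3
  then show ?thesis
    using l forced \<mu> by (simp add: H1_nbhd_V3 Pi_iff H1_forced_labels_def int_pow_mult_eq_self_iff)
next
  case 4
  then show ?thesis
    using l forced \<mu> by (simp add: H1_nbhd_V4 Pi_iff H1_forced_labels_def int_pow_mult_eq_self_iff)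
next
  case (5 j)
  then show ?thesis by simp
next
  case (6 i)
  then show ?thesis
    using l forced \<mu> by (simp add: H1_nbhd_S Pi_iff H1_forced_labels_def int_pow_mult_eq_self_iff)
next
  case (7 i j)
  then show ?thesis
    using l forced \<mu> by (simp add: H1_nbhd_L H1_forced_labels_def)
qed

lemma H1_magic_constant_feasible:
  assumes q: "\<forall>i<t. 1 \<le> q i" and \<mu>: "\<mu> \<in> carrier G"
    and l: "\<And>v. v \<in> H1V 0 t q \<Longrightarrow> l v \<in> carrier G - {\<one>}"
    and magic: "\<And>v. v \<in> H1V 0 t q \<Longrightarrow> finprod G l (H1N 0 t q v) = \<mu>"
  shows "H1_feasible_constant G t q \<mu>"
proof -
  have forced: "H1_forced_labels G t q \<mu> l"
    using q \<mu> l magic by (intro H1_forced_labels_if_magic_equations) auto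
  have "\<mu> [^] (2 * int t) \<noteq> \<one>" if "i < t" "q i = 1" for i
  proof -
    have "finprod G l (L i ` {..<q i}) = \<mu> [^] (2 * int t)"
      using forced that unfolding H1_forced_labels_def by blast
    moreover have "L i ` {..<q i} = {L i 0}"
      using that by auto
    ultimately show ?thesis
      using l[of "L i 0"] that by auto
  qed
  moreover have "\<mu> \<noteq> \<one>"
    using forced l[of V2] by (auto simp: H1_forced_labels_def)
  ultimately show ?thesis
    using forced l[of V1] l[of V2] l[of V3] \<mu>
    by (simp add: H1_feasible_constant_def H1_forced_labels_def)
qed

lemma H1_vertex_magic_if_feasible_constant:
  assumes "3 \<le> card (carrier G)" and q: "\<forall>i<t. 1 \<le> q i"
    and feasible: "H1_feasible_constant G t q \<mu>"
  shows "vertex_magic G (H1V 0 t q) (H1E 0 t q)"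
proof -
  have \<mu>: "\<mu> \<in> carrier G" using feasible by (simp add: H1_feasible_constant_def)
  have "\<exists>f \<in> L i ` {..<q i} \<rightarrow> carrier G - {\<one>}.
      finprod G f (L i ` {..<q i}) = \<mu> [^] (2 * int t)" if "i < t" for i
  proof -
    have "2 \<le> q i \<or> \<mu> [^] (2 * int t) \<noteq> \<one>"
      using q[rule_format, OF that] feasible that unfolding H1_feasible_constant_def by auto
    moreover have "0 < q i"
      using q that by auto
    ultimately show ?thesis
      using \<mu> finprod_nonidentity_labelling_iff[OF assms(1), of "L i ` {..<q i}" "\<mu> [^] (2 * int t)"]
      by auto
  qed
  then obtain F where F: "\<And>i. i < t \<Longrightarrow> F i \<in> L i ` {..<q i} \<rightarrow> carrier G - {\<one>}"
      "\<And>i. i < t \<Longrightarrow> finprod G (F i) (L i ` {..<q i}) = \<mu> [^] (2 * int t)"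
    by metis
  define l where "l v = (case v of V1 \<Rightarrow> \<mu> [^] (1 - 2 * int t) | V2 \<Rightarrow> \<mu> [^] (1 - int t)
      | V3 \<Rightarrow> \<mu> [^] int t | V4 \<Rightarrow> \<mu> [^] int t | L i j \<Rightarrow> F i (L i j) | _ \<Rightarrow> \<mu>)" for v
  have l: "l v \<in> carrier G - {\<one>}" if "v \<in> H1V 0 t q" for v
    using that
  proof (cases rule: H1_verts_cases)
    case (7 i j)
    then show ?thesis using F(1)[of i] by (auto simp: l_def)
  qed (use feasible in \<open>simp_all add: l_def H1_feasible_constant_def\<close>)
  have "finprod G l (L i ` {..<q i}) = \<mu> [^] (2 * int t)" if "i < t" for i
    using F[OF that] by (subst finprod_cong'[where g = "F i"]) (auto simp: l_def)
  then have "H1_forced_labels G t q \<mu> l"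
    by (simp add: H1_forced_labels_def l_def)
  then have "\<forall>v \<in> H1V 0 t q. finprod G l (H1N 0 t q v) = \<mu>"
    using l \<mu> H1_magic_equations_if_forced_labels by blast
  then have "vertex_magic_labeling G (H1V 0 t q) (H1E 0 t q) l"
    using l \<mu> unfolding vertex_magic_labeling_def by blast
  then show ?thesis
    unfolding vertex_magic_def by blast
qed

end

lemma (in comm_group) H1_vertex_magic_imp_no_pendants_at_V2:
  assumes "vertex_magic G (H1V p2 t q) (H1E p2 t q)"
  shows "p2 = 0"
proof (rule ccontr)
  assume "p2 \<noteq> 0"
  from assms obtain l \<mu> where l: "\<And>v. v \<in> H1V p2 t q \<Longrightarrow> l v \<in> carrier G - {\<one>}"
    and magic: "\<And>v. v \<in> H1V p2 t q \<Longrightarrow> finprod G l (H1N p2 t q v) = \<mu>"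
    unfolding vertex_magic_def vertex_magic_labeling_def by blast
  have "l V2 = \<mu>"
    using magic[of "P2 0"] l[of V2] \<open>p2 \<noteq> 0\<close> by (simp add: H1_nbhd_P2)
  moreover have "l V2 \<otimes> l V4 = \<mu>"
    using magic[of V3] l[of V2] l[of V4] by (simp add: H1_nbhd_V3)
  ultimately have "l V4 = \<one>"
    using l[of V2] l[of V4] by (simp add: r_cancel_one)
  then show False using l[of V4] by simp
qed

lemma (in comm_group) H1_vertex_magic_iff:
  assumes "3 \<le> card (carrier G)" and "\<forall>i<t. 1 \<le> q i"
  shows "vertex_magic G (H1V p2 t q) (H1E p2 t q) \<longleftrightarrow>
    p2 = 0 \<and> (\<exists>\<mu>. H1_feasible_constant G t q \<mu>)"
proof
  assume magic: "vertex_magic G (H1V p2 t q) (H1E p2 t q)"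
  then have p2: "p2 = 0" by (rule H1_vertex_magic_imp_no_pendants_at_V2)
  with magic obtain l \<mu> where "\<mu> \<in> carrier G"
    and "\<And>v. v \<in> H1V 0 t q \<Longrightarrow> l v \<in> carrier G - {\<one>}"
    and "\<And>v. v \<in> H1V 0 t q \<Longrightarrow> finprod G l (H1N 0 t q v) = \<mu>"
    unfolding vertex_magic_def vertex_magic_labeling_def by blast
  with p2 assms(2) show "p2 = 0 \<and> (\<exists>\<mu>. H1_feasible_constant G t q \<mu>)"
    using H1_magic_constant_feasible by blast
next
  assume "p2 = 0 \<and> (\<exists>\<mu>. H1_feasible_constant G t q \<mu>)"
  then show "vertex_magic G (H1V p2 t q) (H1E p2 t q)"
    using H1_vertex_magic_if_feasible_constant assms by blast
qed

lemma (in group) H1_feasible_constant_iff_cong: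
  "H1_feasible_constant G t q \<mu> \<longleftrightarrow> \<mu> \<in> carrier G - {\<one>} \<and>
     \<not> [Suc t = 1] (mod ord \<mu>) \<and> \<not> [Suc t = 2] (mod ord \<mu>) \<and>
     \<not> [2 * Suc t = 3] (mod ord \<mu>) \<and>
     ((\<exists>i<t. q i = 1) \<longrightarrow> \<not> [2 * Suc t = 2] (mod ord \<mu>))"
proof (cases "\<mu> \<in> carrier G")
  case True
  have "\<mu> [^] int t = \<one> \<longleftrightarrow> [Suc t = 1] (mod ord \<mu>)"
    using int_pow_eq_one_iff_cong[OF True, of "Suc t" 1] by simp
  moreover have "\<mu> [^] (1 - int t) = \<one> \<longleftrightarrow> [Suc t = 2] (mod ord \<mu>)"
    using int_pow_eq_one_iff_cong[OF True, of 2 "Suc t"] by (simp add: cong_sym_eq)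
  moreover have "\<mu> [^] (1 - 2 * int t) = \<one> \<longleftrightarrow> [2 * Suc t = 3] (mod ord \<mu>)"
    using int_pow_eq_one_iff_cong[OF True, of 3 "2 * Suc t"] by (simp add: cong_sym_eq)
  moreover have "\<mu> [^] (2 * int t) = \<one> \<longleftrightarrow> [2 * Suc t = 2] (mod ord \<mu>)"
    using int_pow_eq_one_iff_cong[OF True, of "2 * Suc t" 2] by simp
  ultimately show ?thesis
    by (auto simp: H1_feasible_constant_def)
qed (simp add: H1_feasible_constant_def)

theorem proposition3p4:
  fixes G :: "('a, 'b) monoid_scheme" and p2 t :: nat and q :: "nat \<Rightarrow> nat"
  assumes "comm_group G" and "finite (carrier G)" and "card (carrier G) \<ge> 3"
    and "t \<ge> 1" and "\<forall>i < t. q i \<ge> 1"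
  shows "vertex_magic G (H1_verts 0 p2 t q) (H1_adj 0 p2 t q) \<longleftrightarrow>
    (p2 = 0 \<and>
     ((\<exists>u \<in> nbhd (H1_verts 0 p2 t q) (H1_adj 0 p2 t q) V1.
         weak_support (H1_verts 0 p2 t q) (H1_adj 0 p2 t q) u) \<longrightarrow>
       (\<exists>g \<in> carrier G - {\<one>\<^bsub>G\<^esub>}.
          \<not> [deg (H1_verts 0 p2 t q) (H1_adj 0 p2 t q) V1 = 1] (mod group.ord G g) \<and>
          \<not> [deg (H1_verts 0 p2 t q) (H1_adj 0 p2 t q) V1 = 2] (mod group.ord G g) \<and>
          \<not> [2 * deg (H1_verts 0 p2 t q) (H1_adj 0 p2 t q) V1 = 2] (mod group.ord G g) \<and>
          \<not> [2 * deg (H1_verts 0 p2 t q) (H1_adj 0 p2 t q) V1 = 3] (mod group.ord G g))) \<and>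
     ((\<forall>u \<in> nbhd (H1_verts 0 p2 t q) (H1_adj 0 p2 t q) V1.
         support (H1_verts 0 p2 t q) (H1_adj 0 p2 t q) u \<longrightarrow>
         strong_support (H1_verts 0 p2 t q) (H1_adj 0 p2 t q) u) \<longrightarrow>
       (\<exists>g \<in> carrier G - {\<one>\<^bsub>G\<^esub>}.
          \<not> [deg (H1_verts 0 p2 t q) (H1_adj 0 p2 t q) V1 = 1] (mod group.ord G g) \<and>
          \<not> [deg (H1_verts 0 p2 t q) (H1_adj 0 p2 t q) V1 = 2] (mod group.ord G g) \<and>
          \<not> [2 * deg (H1_verts 0 p2 t q) (H1_adj 0 p2 t q) V1 = 3] (mod group.ord G g))))"
proof -
  interpret comm_group G by fact
  show ?thesis
  proof (cases "p2 = 0")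
    case True
    show ?thesis
      unfolding True H1_vertex_magic_iff[OF assms(3,5)] H1_feasible_constant_iff_cong H1_deg_V1
        H1_weak_support_nbr_V1_iff[OF assms(4)] H1_support_nbrs_V1_strong_iff[OF assms(4,5)]
      by (cases "\<exists>i<t. q i = 1") auto
  qed (simp add: H1_vertex_magic_iff[OF assms(3,5)])
qed

end
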